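(* For every $(t,h)\in[0,T)\times\mathbb{R}_+$, the map $z\mapsto\widehat J(t,z,h)$ is non-decreasing on $\mathbb{R}_+$.
   Context: Fix constants $T>0$, $r>0$, $\mu\in\mathbb{R}$, $\sigma>0$, $\rho>0$, $m^0\ge 0$, $m^1\ge 0$, $\kappa>0$, $\delta>0$, $\alpha\in(0,1)$, $I>0$ and a number $f(I)>0$. Write $\mathbb{R}_+=(0,\infty)$, $\mathcal{O}=[0,T]\times\mathbb{R}_+^2$, $\theta=(\mu-r)/\sigma$. Let $(\Omega,\mathcal{F},\mathbb{F},\mathbb{P})$ be a complete filtered probability space satisfying the usual conditions, carrying a standard $\mathbb{F}$-Brownian motion $B$. Let $\widehat u(z,h)=(1-\alpha)(z/\alpha)^{\alpha/(\alpha-1)}h$. For $(t,z,h)\in\mathcal{O}$ and $s\in[t,T]$ let $H^2_s=he^{-\delta(s-t)}+\frac{f(I)}{\delta}(1-e^{-\delta(s-t)})$, $M^{H^2}_s=m^0+m^1(H^2_s)^{-\kappa}$, and let $Z^2$ solve $dZ^2_s=(\rho-r+M^{H^2}_s)Z^2_s\,ds-\theta Z^2_s\,dB_s$, $Z^2_t=z$. Define $W(t,z,h)=\mathbb{E}\big[\int_t^T e^{-\int_t^s(\rho+M^{H^2}_u)du}\,\widehat u(Z^2_s,H^2_s)\,ds\big]$; subscripts denote partial derivatives. For $z,h>0$ and $s\ge0$ let $H^1_s=he^{-\delta s}$, $M^{H^1}_s=m^0+m^1(H^1_s)^{-\kappa}$ and $Z^1_s=z\exp\big(-(r+\tfrac12\theta^2)s-\theta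 B_s+\int_0^s(\rho+M^{H^1}_u)du\big)$, with $\mathbb{E}_{z,h}$ the corresponding expectation. For $(t,z,h)\in\mathcal{O}$, $\widehat J(t,z,h)=\sup_{0\le\tau\le T-t}\mathbb{E}_{z,h}\Big[\int_0^\tau\Big(Iz\,e^{-rs-\theta B_s-\frac12\theta^2 s}-e^{-\int_0^s(\rho+M^{H^1}_u)du}f(I)W_h(t+s,Z^1_s,H^1_s)\Big)ds\Big]$ over $\mathbb{F}$-stopping times with values in $[0,T-t]$. *)

theory Defs
  imports "HOL-Probability.Probability"
begin

definition std_BM_setting :: "'a measure \<Rightarrow> (real \<Rightarrow> 'a measure) \<Rightarrow> (real \<Rightarrow> 'a \<Rightarrow> real) \<Rightarrow> bool" where
  "std_BM_setting M F B \<longleftrightarrow>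
     prob_space M \<and> complete_measure M \<and>
     filtration (space M) F \<and> (\<forall>t. sets (F t) \<subseteq> sets M) \<and>
     \<comment> \<open>usual conditions: completeness of F_0 and right-continuity\<close>
     null_sets M \<subseteq> sets (F 0) \<and>
     (\<forall>t. sets (F t) = (\<Inter>u\<in>{t<..}. sets (F u))) \<and>
     \<comment> \<open>B is adapted, starts at 0 and has continuous paths\<close>
     (\<forall>t\<ge>0. B t \<in> borel_measurable (F t)) \<and>
     (\<forall>\<omega>\<in>space M. B 0 \<omega> = 0 \<and> continuous_on {0..} (\<lambda>t. B t \<omega>)) \<and>
     \<comment> \<open>increments are centred Gaussian with variance t - s, independent of F_s\<close>
     (\<forall>s t. 0 \<le> s \<and> s < t \<longrightarrow>
        distributed M lborel (\<lambda>\<omega>. B t \<omega> - B s \<omega>) (normal_density 0 (sqrt (t - s))) \<and>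
        (\<forall>A\<in>sets (F s). \<forall>C\<in>sets borel.
           measure M (A \<inter> ((\<lambda>\<omega>. B t \<omega> - B s \<omega>) -` C \<inter> space M))
             = measure M A * measure M ((\<lambda>\<omega>. B t \<omega> - B s \<omega>) -` C \<inter> space M)))"

definition theta :: "real \<Rightarrow> real \<Rightarrow> real \<Rightarrow> real" where
  "theta r \<mu> \<sigma> = (\<mu> - r) / \<sigma>"

definition u_hat :: "real \<Rightarrow> real \<Rightarrow> real \<Rightarrow> real" where
  "u_hat \<alpha> z h = (1 - \<alpha>) * (z / \<alpha>) powr (\<alpha> / (\<alpha> - 1)) * h"

definition MH :: "real \<Rightarrow> real \<Rightarrow> real \<Rightarrow> real \<Rightarrow> real" where
  "MH m0 m1 \<kappa> x = m0 + m1 * x powr (- \<kappa>)"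

definition H2 :: "real \<Rightarrow> real \<Rightarrow> real \<Rightarrow> real \<Rightarrow> real \<Rightarrow> real" where
  "H2 \<delta> fI t h s = h * exp (- \<delta> * (s - t)) + fI / \<delta> * (1 - exp (- \<delta> * (s - t)))"

text \<open>Z^2: the (explicit, pathwise) solution of
  dZ = (rho - r + M^{H^2}) Z ds - theta Z dB, Z_t = z.\<close>
definition Z2 :: "real \<Rightarrow> real \<Rightarrow> real \<Rightarrow> real \<Rightarrow> real \<Rightarrow> real \<Rightarrow> real \<Rightarrow> real \<Rightarrow> real
    \<Rightarrow> (real \<Rightarrow> 'a \<Rightarrow> real) \<Rightarrow> real \<Rightarrow> real \<Rightarrow> real \<Rightarrow> real \<Rightarrow> 'a \<Rightarrow> real" where
  "Z2 r \<mu> \<sigma> \<rho> m0 m1 \<kappa> \<delta> fI B t z h s \<omega> =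
     z * exp (integral {t..s} (\<lambda>u. \<rho> - r + MH m0 m1 \<kappa> (H2 \<delta> fI t h u))
              - (theta r \<mu> \<sigma>)\<^sup>2 / 2 * (s - t) - theta r \<mu> \<sigma> * (B s \<omega> - B t \<omega>))"

definition W :: "'a measure \<Rightarrow> (real \<Rightarrow> 'a \<Rightarrow> real) \<Rightarrow> real \<Rightarrow> real \<Rightarrow> real \<Rightarrow> real \<Rightarrow> real
    \<Rightarrow> real \<Rightarrow> real \<Rightarrow> real \<Rightarrow> real \<Rightarrow> real \<Rightarrow> real \<Rightarrow> real \<Rightarrow> real \<Rightarrow> real \<Rightarrow> real" where
  "W M B T r \<mu> \<sigma> \<rho> m0 m1 \<kappa> \<delta> \<alpha> fI t z h =
     (\<integral>\<omega>. integral {t..T} (\<lambda>s.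
         exp (- integral {t..s} (\<lambda>u. \<rho> + MH m0 m1 \<kappa> (H2 \<delta> fI t h u)))
         * u_hat \<alpha> (Z2 r \<mu> \<sigma> \<rho> m0 m1 \<kappa> \<delta> fI B t z h s \<omega>) (H2 \<delta> fI t h s)) \<partial>M)"

definition W_h :: "'a measure \<Rightarrow> (real \<Rightarrow> 'a \<Rightarrow> real) \<Rightarrow> real \<Rightarrow> real \<Rightarrow> real \<Rightarrow> real \<Rightarrow> real
    \<Rightarrow> real \<Rightarrow> real \<Rightarrow> real \<Rightarrow> real \<Rightarrow> real \<Rightarrow> real \<Rightarrow> real \<Rightarrow> real \<Rightarrow> real \<Rightarrow> real" where
  "W_h M B T r \<mu> \<sigma> \<rho> m0 m1 \<kappa> \<delta> \<alpha> fI t z h =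
     deriv (\<lambda>k. W M B T r \<mu> \<sigma> \<rho> m0 m1 \<kappa> \<delta> \<alpha> fI t z k) h"

definition H1 :: "real \<Rightarrow> real \<Rightarrow> real \<Rightarrow> real" where
  "H1 \<delta> h s = h * exp (- \<delta> * s)"

definition Z1 :: "real \<Rightarrow> real \<Rightarrow> real \<Rightarrow> real \<Rightarrow> real \<Rightarrow> real \<Rightarrow> real \<Rightarrow> real
    \<Rightarrow> (real \<Rightarrow> 'a \<Rightarrow> real) \<Rightarrow> real \<Rightarrow> real \<Rightarrow> real \<Rightarrow> 'a \<Rightarrow> real" where
  "Z1 r \<mu> \<sigma> \<rho> m0 m1 \<kappa> \<delta> B z h s \<omega> =
     z * exp (- (r + (theta r \<mu> \<sigma>)\<^sup>2 / 2) * s - theta r \<mu> \<sigma> * B s \<omega>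
              + integral {0..s} (\<lambda>u. \<rho> + MH m0 m1 \<kappa> (H1 \<delta> h u)))"

definition stopping_times_upto :: "'a measure \<Rightarrow> (real \<Rightarrow> 'a measure) \<Rightarrow> real \<Rightarrow> ('a \<Rightarrow> real) set" where
  "stopping_times_upto M F b =
     {\<tau>. stopping_time F \<tau> \<and> (\<forall>\<omega>\<in>space M. 0 \<le> \<tau> \<omega> \<and> \<tau> \<omega> \<le> b)}"

definition J_hat :: "'a measure \<Rightarrow> (real \<Rightarrow> 'a measure) \<Rightarrow> (real \<Rightarrow> 'a \<Rightarrow> real) \<Rightarrow> real
    \<Rightarrow> real \<Rightarrow> real \<Rightarrow> real \<Rightarrow> real \<Rightarrow> real \<Rightarrow> real \<Rightarrow> real \<Rightarrow> real \<Rightarrow> real \<Rightarrow> real \<Rightarrow> real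
    \<Rightarrow> real \<Rightarrow> real \<Rightarrow> real \<Rightarrow> ereal" where
  "J_hat M F B T r \<mu> \<sigma> \<rho> m0 m1 \<kappa> \<delta> \<alpha> I fI t z h =
     (SUP \<tau>\<in>stopping_times_upto M F (T - t). ereal (\<integral>\<omega>. integral {0..\<tau> \<omega>} (\<lambda>s.
         I * z * exp (- r * s - theta r \<mu> \<sigma> * B s \<omega> - (theta r \<mu> \<sigma>)\<^sup>2 / 2 * s)
         - exp (- integral {0..s} (\<lambda>u. \<rho> + MH m0 m1 \<kappa> (H1 \<delta> h u))) * fI
           * W_h M B T r \<mu> \<sigma> \<rho> m0 m1 \<kappa> \<delta> \<alpha> fI (t + s)
               (Z1 r \<mu> \<sigma> \<rho> m0 m1 \<kappa> \<delta> B z h s \<omega>) (H1 \<delta> h s)) \<partial>M))"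

end

theory Submission
  imports Defs
begin

(*
  The utility u_hat is homogeneous of degree p = alpha/(alpha - 1) < 0 in z and Z^2 is linear in
  its starting point, so W(t,z,h) = z^p W(t,1,h).  Taking expectations with the Gaussian moment
  generating function turns W(t,1,h) into the integral of a deterministic density in h; that
  density increases with h because H^2 increases with h and the intensity M^H decreases with H.
  Hence W_h = z^p (a nonnegative quantity), the integrand of J_hat has the form
  z a_s - z^p b_s with a_s, b_s >= 0 along every path, and this is nondecreasing in z.  The
  property survives integration in time and in omega (both terms are integrable, being dominated
  by exponential functionals of Brownian motion) and the supremum over stopping times.
*)

section \<open>Parametric interval integrals\<close>

lemma affine_unit_interval_mem:
  fixes a y v :: real
  assumes "v \<in> {0..1}" "a \<le> y"
  shows "a + v * (y - a) \<in> {a..y}"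
  using assms mult_left_le_one_le[of "y - a" v] by auto

lemma continuous_on_integral_upper_limit_param:
  fixes \<phi> :: "'k::topological_space \<Rightarrow> real \<Rightarrow> real"
  assumes cont: "continuous_on (K \<times> {a..b}) (\<lambda>(k,u). \<phi> k u)"
  shows "continuous_on (K \<times> {a..b}) (\<lambda>(k,y). integral {a..y} (\<phi> k))"
proof -
  have rescale: "integral {a..y} (\<phi> k) = integral {0..1} (\<lambda>v. (y - a) * \<phi> k (a + v * (y - a)))"
    if "k \<in> K" "y \<in> {a..b}" for k y
  proof -
    have "continuous_on {a..y} (\<lambda>u. (\<lambda>(k,u). \<phi> k u) (k,u))"
      by (rule continuous_on_compose2[OF cont]) (use that in \<open>auto intro!: continuous_intros\<close>)
    then have "continuous_on {a..y} (\<phi> k)" by simp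
    then have "((\<lambda>v. (y - a) *\<^sub>R \<phi> k (a + v * (y - a))) has_integral
                 integral {a + 0 * (y - a)..a + 1 * (y - a)} (\<phi> k)) {0..1}"
      by (intro has_integral_substitution[where c=a and d=y] image_subsetI affine_unit_interval_mem
            derivative_eq_intros refl) (use that in auto)
    then show ?thesis by (simp add: has_integral_iff)
  qed
  have "continuous_on ((K \<times> {a..b}) \<times> cbox 0 1)
          (\<lambda>x. (\<lambda>(k,u). \<phi> k u) (fst (fst x), a + snd x * (snd (fst x) - a)))"
  proof (rule continuous_on_compose2[OF cont], (intro continuous_intros)[1], rule image_subsetI)
    fix x :: "('k \<times> real) \<times> real" assume "x \<in> (K \<times> {a..b}) \<times> cbox 0 1"
    then show "(fst (fst x), a + snd x * (snd (fst x) - a)) \<in> K \<times> {a..b}"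
      using affine_unit_interval_mem[of "snd x" a "snd (fst x)"] by (auto simp: mem_Times_iff)
  qed
  then have "continuous_on (K \<times> {a..b})
      (\<lambda>ky. integral (cbox 0 1) (\<lambda>v. (snd ky - a) * \<phi> (fst ky) (a + v * (snd ky - a))))"
    by (intro integral_continuous_on_param[unfolded split_beta] continuous_intros) simp
  then show ?thesis
    by (rule continuous_on_eq) (auto simp: rescale cbox_interval)
qed

lemma continuous_on_slice:
  assumes "continuous_on (A \<times> B) (\<lambda>(k,x). f k x)" "k \<in> A" "S \<subseteq> B"
  shows "continuous_on S (f k)"
proof -
  have "continuous_on S (\<lambda>x. (\<lambda>(k,x). f k x) (k, x))"
    by (rule continuous_on_compose2[OF assms(1)]) (use assms in \<open>auto intro!: continuous_intros\<close>)
  then show ?thesis by simp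
qed

lemma nn_integral_indicator_eq_integral:
  fixes g :: "real \<Rightarrow> real"
  assumes "continuous_on {a..b} g" "\<And>s. s \<in> {a..b} \<Longrightarrow> 0 \<le> g s"
  shows "(\<integral>\<^sup>+s. ennreal (indicator {a..b} s * g s) \<partial>lborel) = ennreal (integral {a..b} g)"
proof (rule nn_integral_has_integral_lborel)
  show "(\<lambda>s. indicator {a..b} s * g s) \<in> borel_measurable borel"
    using borel_measurable_continuous_on_indicator[OF _ assms(1)] by simp
  show "0 \<le> indicator {a..b} x * g x" for x
    using assms(2) by (auto simp: indicator_def)
  have "(g has_integral integral {a..b} g) {a..b}"
    using integrable_continuous_interval[OF assms(1)] by (simp add: has_integral_integral)
  moreover have "(\<lambda>s. indicator {a..b} s * g s) = (\<lambda>x. if x \<in> {a..b} then g x else 0)"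
    by (auto simp: indicator_def fun_eq_iff)
  ultimately show "((\<lambda>s. indicator {a..b} s * g s) has_integral integral {a..b} g) UNIV"
    using has_integral_restrict_UNIV[of "{a..b}" g] by simp
qed

lemma LIMSEQ_floor_mult_div:
  "(\<lambda>n. real_of_int \<lfloor>s * real (Suc n)\<rfloor> / real (Suc n)) \<longlonglongrightarrow> (s::real)"
proof (rule tendsto_sandwich[of "\<lambda>n. s - 1 / real (Suc n)" _ _ "\<lambda>_. s"])
  have "s - 1 / N \<le> real_of_int \<lfloor>s * N\<rfloor> / N \<and> real_of_int \<lfloor>s * N\<rfloor> / N \<le> s" if "N > 0" for N
  proof -
    have "(s - 1 / N) * N = s * N - 1"
      using that by (simp add: algebra_simps)
    then show ?thesis
      using that floor_correct[of "s * N"] by (simp add: pos_le_divide_eq pos_divide_le_eq)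
  qed
  then show "\<forall>\<^sub>F n in sequentially. s - 1 / real (Suc n) \<le> real_of_int \<lfloor>s * real (Suc n)\<rfloor> / real (Suc n)"
    "\<forall>\<^sub>F n in sequentially. real_of_int \<lfloor>s * real (Suc n)\<rfloor> / real (Suc n) \<le> s"
    by simp_all
  show "(\<lambda>n. s - 1 / real (Suc n)) \<longlonglongrightarrow> s"
    using tendsto_diff[OF tendsto_const LIMSEQ_Suc[OF lim_const_over_n[of 1]]] by simp
qed simp

lemma borel_measurable_pair_lborel_if_continuous:
  fixes f :: "real \<Rightarrow> 'a \<Rightarrow> real"
  assumes cont: "\<And>\<omega>. \<omega> \<in> space M \<Longrightarrow> continuous_on UNIV (\<lambda>s. f s \<omega>)"
    and meas: "\<And>s. f s \<in> borel_measurable M"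
  shows "(\<lambda>(\<omega>,s). f s \<omega>) \<in> borel_measurable (M \<Otimes>\<^sub>M lborel)"
proof (rule borel_measurable_LIMSEQ_real)
  fix n
  show "(\<lambda>x. f (real_of_int \<lfloor>snd x * real (Suc n)\<rfloor> / real (Suc n)) (fst x)) \<in> borel_measurable (M \<Otimes>\<^sub>M lborel)"
    by (rule measurable_compose_countable'[where I=UNIV and g="\<lambda>x. \<lfloor>snd x * real (Suc n)\<rfloor>"])
       (use meas in measurable)
next
  fix x :: "'a \<times> real" assume "x \<in> space (M \<Otimes>\<^sub>M lborel)"
  then have "isCont (\<lambda>s. f s (fst x)) (snd x)"
    using cont by (cases x) (simp add: space_pair_measure continuous_on_eq_continuous_at)
  then show "(\<lambda>n. f (real_of_int \<lfloor>snd x * real (Suc n)\<rfloor> / real (Suc n)) (fst x)) \<longlonglongrightarrow> (case x of (\<omega>, s) \<Rightarrow> f s \<omega>)"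
    using isCont_tendsto_compose[OF _ LIMSEQ_floor_mult_div] by (simp add: split_beta)
qed

lemma borel_measurable_pair_indicator_continuous:
  fixes f :: "real \<Rightarrow> 'a \<Rightarrow> real"
  assumes "a \<le> b"
    and cont: "\<And>\<omega>. \<omega> \<in> space M \<Longrightarrow> continuous_on {a..b} (\<lambda>s. f s \<omega>)"
    and meas: "\<And>s. s \<in> {a..b} \<Longrightarrow> f s \<in> borel_measurable M"
  shows "(\<lambda>(\<omega>,s). indicator {a..b} s * f s \<omega>) \<in> borel_measurable (M \<Otimes>\<^sub>M lborel)"
proof -
  define clamp where "clamp s = max a (min b s)" for s
  have clamp_mem: "a \<le> clamp s" "clamp s \<le> b" for s
    using \<open>a \<le> b\<close> by (auto simp: clamp_def)
  have "continuous_on UNIV clamp"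
    unfolding clamp_def by (intro continuous_intros)
  then have "(\<lambda>(\<omega>,s). f (clamp s) \<omega>) \<in> borel_measurable (M \<Otimes>\<^sub>M lborel)"
    by (intro borel_measurable_pair_lborel_if_continuous continuous_on_compose2[OF cont]
          meas) (auto simp: clamp_mem)
  then have "(\<lambda>(\<omega>,s). indicator {a..b} s * f (clamp s) \<omega>) \<in> borel_measurable (M \<Otimes>\<^sub>M lborel)"
    by measurable
  also have "(\<lambda>(\<omega>,s). indicator {a..b} s * f (clamp s) \<omega>) = (\<lambda>(\<omega>,s). indicator {a..b} s * f s \<omega>)"
    by (auto simp: fun_eq_iff indicator_def clamp_def)
  finally show ?thesis .
qed

lemma borel_measurable_integral_upto:
  fixes f :: "real \<Rightarrow> 'a \<Rightarrow> real"
  assumes "a \<le> b"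
    and cont: "\<And>\<omega>. \<omega> \<in> space M \<Longrightarrow> continuous_on {a..b} (\<lambda>s. f s \<omega>)"
    and meas: "\<And>s. s \<in> {a..b} \<Longrightarrow> f s \<in> borel_measurable M"
    and \<tau>: "\<tau> \<in> borel_measurable M" "\<And>\<omega>. \<omega> \<in> space M \<Longrightarrow> \<tau> \<omega> \<in> {a..b}"
  shows "(\<lambda>\<omega>. integral {a..\<tau> \<omega>} (\<lambda>s. f s \<omega>)) \<in> borel_measurable M"
proof -
  interpret sigma_finite_measure lborel by (rule sigma_finite_lborel)
  note [measurable] = \<tau>(1) borel_measurable_pair_indicator_continuous[OF \<open>a \<le> b\<close> cont meas]
  have "(\<lambda>\<omega>. \<integral>s. (if s \<le> \<tau> \<omega> then indicator {a..b} s * f s \<omega> else 0) \<partial>lborel) \<in> borel_measurable M"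
    by measurable
  then show ?thesis
  proof (rule measurable_cong[THEN iffD1, rotated])
    fix \<omega> assume \<omega>: "\<omega> \<in> space M"
    have sub: "{a..\<tau> \<omega>} \<subseteq> {a..b}"
      using \<tau>(2)[OF \<omega>] by auto
    have "set_integrable lborel {a..\<tau> \<omega>} (\<lambda>s. f s \<omega>)"
      by (rule borel_integrable_atLeastAtMost', rule continuous_on_subset[OF cont[OF \<omega>] sub])
    then have "integral {a..\<tau> \<omega>} (\<lambda>s. f s \<omega>) = (LINT s : {a..\<tau> \<omega>} | lborel. f s \<omega>)"
      by (simp add: set_borel_integral_eq_integral)
    also have "\<dots> = (\<integral>s. (if s \<le> \<tau> \<omega> then indicator {a..b} s * f s \<omega> else 0) \<partial>lborel)"
      unfolding set_lebesgue_integral_def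
      by (rule Bochner_Integration.integral_cong) (use sub in \<open>auto simp: indicator_def\<close>)
    finally show "(\<integral>s. (if s \<le> \<tau> \<omega> then indicator {a..b} s * f s \<omega> else 0) \<partial>lborel)
        = integral {a..\<tau> \<omega>} (\<lambda>s. f s \<omega>)" by simp
  qed
qed

lemma nn_integral_integral_interval:
  fixes f :: "real \<Rightarrow> 'a \<Rightarrow> real"
  assumes "sigma_finite_measure M" "a \<le> b"
    and cont: "\<And>\<omega>. \<omega> \<in> space M \<Longrightarrow> continuous_on {a..b} (\<lambda>s. f s \<omega>)"
    and meas: "\<And>s. s \<in> {a..b} \<Longrightarrow> f s \<in> borel_measurable M"
    and nonneg: "\<And>s \<omega>. s \<in> {a..b} \<Longrightarrow> 0 \<le> f s \<omega>"
  shows "(\<integral>\<^sup>+\<omega>. ennreal (integral {a..b} (\<lambda>s. f s \<omega>)) \<partial>M)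
    = (\<integral>\<^sup>+s. (\<integral>\<^sup>+\<omega>. ennreal (indicator {a..b} s * f s \<omega>) \<partial>M) \<partial>lborel)"
proof -
  interpret M: sigma_finite_measure M by fact
  interpret lborel: sigma_finite_measure lborel by (rule sigma_finite_lborel)
  interpret pair_sigma_finite M lborel ..
  have [measurable]: "(\<lambda>(\<omega>,s). indicator {a..b} s * f s \<omega>) \<in> borel_measurable (M \<Otimes>\<^sub>M lborel)"
    by (rule borel_measurable_pair_indicator_continuous[OF \<open>a \<le> b\<close> cont meas])
  have "(\<integral>\<^sup>+\<omega>. ennreal (integral {a..b} (\<lambda>s. f s \<omega>)) \<partial>M)
      = (\<integral>\<^sup>+\<omega>. (\<integral>\<^sup>+s. ennreal (indicator {a..b} s * f s \<omega>) \<partial>lborel) \<partial>M)"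
    by (intro nn_integral_cong nn_integral_indicator_eq_integral[symmetric] cont nonneg) auto
  also have "\<dots> = (\<integral>\<^sup>+s. (\<integral>\<^sup>+\<omega>. ennreal (indicator {a..b} s * f s \<omega>) \<partial>M) \<partial>lborel)"
    by (rule Fubini'[symmetric]) measurable
  finally show ?thesis .
qed

lemma integrable_integral_upto:
  fixes f :: "real \<Rightarrow> 'a \<Rightarrow> real"
  assumes "a \<le> b"
    and cont: "\<And>\<omega>. \<omega> \<in> space M \<Longrightarrow> continuous_on {a..b} (\<lambda>s. f s \<omega>)"
    and meas: "\<And>s. s \<in> {a..b} \<Longrightarrow> f s \<in> borel_measurable M"
    and nonneg: "\<And>\<omega> s. \<omega> \<in> space M \<Longrightarrow> s \<in> {a..b} \<Longrightarrow> 0 \<le> f s \<omega>"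
    and int: "integrable M (\<lambda>\<omega>. integral {a..b} (\<lambda>s. f s \<omega>))"
    and \<tau>: "\<tau> \<in> borel_measurable M" "\<And>\<omega>. \<omega> \<in> space M \<Longrightarrow> \<tau> \<omega> \<in> {a..b}"
  shows "integrable M (\<lambda>\<omega>. integral {a..\<tau> \<omega>} (\<lambda>s. f s \<omega>))"
proof (rule Bochner_Integration.integrable_bound[OF int])
  show "(\<lambda>\<omega>. integral {a..\<tau> \<omega>} (\<lambda>s. f s \<omega>)) \<in> borel_measurable M"
    by (rule borel_measurable_integral_upto[OF assms(1-3) \<tau>])
  show "AE \<omega> in M. norm (integral {a..\<tau> \<omega>} (\<lambda>s. f s \<omega>)) \<le> norm (integral {a..b} (\<lambda>s. f s \<omega>))"
  proof (rule AE_I2)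
    fix \<omega> assume \<omega>: "\<omega> \<in> space M"
    have sub: "{a..\<tau> \<omega>} \<subseteq> {a..b}"
      using \<tau>(2)[OF \<omega>] by auto
    have int_ab: "(\<lambda>s. f s \<omega>) integrable_on {a..b}"
      by (rule integrable_continuous_interval[OF cont[OF \<omega>]])
    have int_a\<tau>: "(\<lambda>s. f s \<omega>) integrable_on {a..\<tau> \<omega>}"
      by (rule integrable_on_subinterval[OF int_ab sub])
    have "0 \<le> integral {a..\<tau> \<omega>} (\<lambda>s. f s \<omega>)"
      by (rule integral_nonneg[OF int_a\<tau>]) (use nonneg[OF \<omega>] sub in auto)
    moreover have "integral {a..\<tau> \<omega>} (\<lambda>s. f s \<omega>) \<le> integral {a..b} (\<lambda>s. f s \<omega>)"
      by (rule integral_subset_le[OF sub int_a\<tau> int_ab]) (use nonneg[OF \<omega>] in auto)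
    ultimately show "norm (integral {a..\<tau> \<omega>} (\<lambda>s. f s \<omega>)) \<le> norm (integral {a..b} (\<lambda>s. f s \<omega>))"
      by simp
  qed
qed

section \<open>Exponential functionals of Brownian motion\<close>

lemma normal_density_mult_exp:
  assumes "\<sigma> > 0"
  shows "normal_density 0 \<sigma> x * exp (c * x) = exp (c\<^sup>2 * \<sigma>\<^sup>2 / 2) * normal_density (c * \<sigma>\<^sup>2) \<sigma> x"
proof -
  have "- (x - 0)\<^sup>2 / (2 * \<sigma>\<^sup>2) + c * x = c\<^sup>2 * \<sigma>\<^sup>2 / 2 + (- (x - c * \<sigma>\<^sup>2)\<^sup>2 / (2 * \<sigma>\<^sup>2))"
    using assms by (simp add: field_simps power2_eq_square)
  then show ?thesis
    unfolding normal_density_def by (simp add: exp_add[symmetric] mult.assoc mult.left_commute)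
qed

lemma nn_integral_normal_density_mult_exp:
  assumes "\<sigma> > 0"
  shows "(\<integral>\<^sup>+x. ennreal (normal_density 0 \<sigma> x) * ennreal (exp (c * x)) \<partial>lborel)
    = ennreal (exp (c\<^sup>2 * \<sigma>\<^sup>2 / 2))"
proof -
  have "(\<integral>\<^sup>+x. ennreal (normal_density 0 \<sigma> x) * ennreal (exp (c * x)) \<partial>lborel)
      = (\<integral>\<^sup>+x. ennreal (exp (c\<^sup>2 * \<sigma>\<^sup>2 / 2)) * ennreal (normal_density (c * \<sigma>\<^sup>2) \<sigma> x) \<partial>lborel)"
    using normal_density_mult_exp[OF assms]
    by (intro nn_integral_cong) (simp add: ennreal_mult[symmetric])
  also have "\<dots> = ennreal (exp (c\<^sup>2 * \<sigma>\<^sup>2 / 2)) * (\<integral>\<^sup>+x. ennreal (normal_density (c * \<sigma>\<^sup>2) \<sigma> x) \<partial>lborel)"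
    by (rule nn_integral_cmult) simp
  also have "(\<integral>\<^sup>+x. ennreal (normal_density (c * \<sigma>\<^sup>2) \<sigma> x) \<partial>lborel) = 1"
    using assms by (subst nn_integral_eq_integral)
      (auto simp: integrable_normal_density integral_normal_density)
  finally show ?thesis by simp
qed

lemma std_BM_settingD:
  assumes "std_BM_setting M F B"
  shows "prob_space M"
    and "\<And>s. space (F s) = space M" "\<And>s. sets (F s) \<subseteq> sets M"
    and "\<And>s. 0 \<le> s \<Longrightarrow> B s \<in> borel_measurable M"
    and "\<And>\<omega>. \<omega> \<in> space M \<Longrightarrow> B 0 \<omega> = 0"
    and "\<And>\<omega>. \<omega> \<in> space M \<Longrightarrow> continuous_on {0..} (\<lambda>t. B t \<omega>)"
    and "\<And>s t. 0 \<le> s \<Longrightarrow> s < t \<Longrightarrow>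
           distributed M lborel (\<lambda>\<omega>. B t \<omega> - B s \<omega>) (normal_density 0 (sqrt (t - s)))"
proof -
  note A = assms[unfolded std_BM_setting_def]
  show "prob_space M" using A by blast
  show space: "space (F s) = space M" for s using A by (auto simp: filtration_def)
  show sets: "sets (F s) \<subseteq> sets M" for s using A by blast
  show "B s \<in> borel_measurable M" if "0 \<le> s" for s
  proof (rule measurable_from_subalg)
    show "subalgebra M (F s)" using space sets by (auto simp: subalgebra_def)
    show "B s \<in> borel_measurable (F s)" using A that by blast
  qed
  show "B 0 \<omega> = 0" if "\<omega> \<in> space M" for \<omega> using A that by blast
  show "continuous_on {0..} (\<lambda>t. B t \<omega>)" if "\<omega> \<in> space M" for \<omega> using A that by blast
  show "distributed M lborel (\<lambda>\<omega>. B t \<omega> - B s \<omega>) (normal_density 0 (sqrt (t - s)))"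
    if "0 \<le> s" "s < t" for s t using A that by blast
qed

lemma nn_integral_exp_BM_increment:
  assumes BM: "std_BM_setting M F B" and "0 \<le> t0" "t0 \<le> s"
  shows "(\<integral>\<^sup>+\<omega>. ennreal (exp (c * (B s \<omega> - B t0 \<omega>))) \<partial>M) = ennreal (exp (c\<^sup>2 * (s - t0) / 2))"
proof (cases "s = t0")
  case True
  interpret prob_space M using std_BM_settingD(1)[OF BM] .
  show ?thesis using True by (simp add: emeasure_space_1)
next
  case False
  then have "t0 < s" using assms by simp
  then have "(\<integral>\<^sup>+\<omega>. ennreal (exp (c * (B s \<omega> - B t0 \<omega>))) \<partial>M)
      = (\<integral>\<^sup>+x. ennreal (normal_density 0 (sqrt (s - t0)) x) * ennreal (exp (c * x)) \<partial>lborel)"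
    by (subst distributed_nn_integral[OF std_BM_settingD(7)[OF BM \<open>0 \<le> t0\<close>]]) auto
  also have "\<dots> = ennreal (exp (c\<^sup>2 * (sqrt (s - t0))\<^sup>2 / 2))"
    by (rule nn_integral_normal_density_mult_exp) (use \<open>t0 < s\<close> in simp)
  finally show ?thesis using \<open>t0 < s\<close> by simp
qed

lemma has_bochner_integral_integral_exp_BM:
  assumes BM: "std_BM_setting M F B" and "0 \<le> t0" "t0 \<le> t1"
    and G: "continuous_on {t0..t1} G" "\<And>s. s \<in> {t0..t1} \<Longrightarrow> 0 \<le> G s"
  shows "has_bochner_integral M (\<lambda>\<omega>. integral {t0..t1} (\<lambda>s. G s * exp (c * (B s \<omega> - B t0 \<omega>))))
           (integral {t0..t1} (\<lambda>s. G s * exp (c\<^sup>2 * (s - t0) / 2)))"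
proof -
  interpret prob_space M using std_BM_settingD(1)[OF BM] .
  define f where "f s \<omega> = G s * exp (c * (B s \<omega> - B t0 \<omega>))" for s \<omega>
  define g where "g s = G s * exp (c\<^sup>2 * (s - t0) / 2)" for s
  have cont_f: "continuous_on {t0..t1} (\<lambda>s. f s \<omega>)" if "\<omega> \<in> space M" for \<omega>
  proof -
    have "continuous_on {t0..t1} (\<lambda>s. B s \<omega>)"
      by (rule continuous_on_subset[OF std_BM_settingD(6)[OF BM that]]) (use \<open>0 \<le> t0\<close> in auto)
    then show ?thesis unfolding f_def by (intro continuous_intros G)
  qed
  have meas_f: "f s \<in> borel_measurable M" if "s \<in> {t0..t1}" for s
  proof -
    have [measurable]: "B s \<in> borel_measurable M" "B t0 \<in> borel_measurable M"
      using std_BM_settingD(4)[OF BM] that \<open>0 \<le> t0\<close> by auto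
    show ?thesis unfolding f_def by measurable
  qed
  have f_nonneg: "0 \<le> f s \<omega>" if "s \<in> {t0..t1}" for s \<omega>
    unfolding f_def using G(2)[OF that] by simp
  have cont_g: "continuous_on {t0..t1} g"
    unfolding g_def by (intro continuous_intros G) auto
  have expectation_f: "(\<integral>\<^sup>+\<omega>. ennreal (indicator {t0..t1} s * f s \<omega>) \<partial>M) = ennreal (indicator {t0..t1} s * g s)"
    for s
  proof (cases "s \<in> {t0..t1}")
    case True
    have [measurable]: "B s \<in> borel_measurable M" "B t0 \<in> borel_measurable M"
      using std_BM_settingD(4)[OF BM] True \<open>0 \<le> t0\<close> by auto
    have "(\<integral>\<^sup>+\<omega>. ennreal (indicator {t0..t1} s * f s \<omega>) \<partial>M)
        = ennreal (G s) * (\<integral>\<^sup>+\<omega>. ennreal (exp (c * (B s \<omega> - B t0 \<omega>))) \<partial>M)"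
      using True G(2)[OF True]
      by (subst nn_integral_cmult[symmetric]) (auto intro!: nn_integral_cong simp: f_def ennreal_mult)
    also have "\<dots> = ennreal (indicator {t0..t1} s * g s)"
      using True G(2)[OF True] nn_integral_exp_BM_increment[OF BM \<open>0 \<le> t0\<close>, of s c]
      by (simp add: g_def ennreal_mult)
    finally show ?thesis .
  qed simp
  have "(\<integral>\<^sup>+\<omega>. ennreal (integral {t0..t1} (\<lambda>s. f s \<omega>)) \<partial>M)
      = (\<integral>\<^sup>+s. (\<integral>\<^sup>+\<omega>. ennreal (indicator {t0..t1} s * f s \<omega>) \<partial>M) \<partial>lborel)"
    by (rule nn_integral_integral_interval[OF sigma_finite_measure_axioms \<open>t0 \<le> t1\<close> cont_f meas_f f_nonneg])
  also have "\<dots> = ennreal (integral {t0..t1} g)"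
    unfolding expectation_f
    by (rule nn_integral_indicator_eq_integral[OF cont_g]) (use G(2) in \<open>auto simp: g_def\<close>)
  finally have "(\<integral>\<^sup>+\<omega>. ennreal (integral {t0..t1} (\<lambda>s. f s \<omega>)) \<partial>M) = ennreal (integral {t0..t1} g)" .
  moreover have "(\<lambda>\<omega>. integral {t0..t1} (\<lambda>s. f s \<omega>)) \<in> borel_measurable M"
    by (rule borel_measurable_integral_upto[where \<tau>="\<lambda>_. t1", OF \<open>t0 \<le> t1\<close> cont_f meas_f])
       (use \<open>t0 \<le> t1\<close> in auto)
  moreover have "0 \<le> integral {t0..t1} (\<lambda>s. f s \<omega>)" if "\<omega> \<in> space M" for \<omega>
    by (rule integral_nonneg[OF integrable_continuous_interval[OF cont_f[OF that]]]) (rule f_nonneg)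
  moreover have "0 \<le> integral {t0..t1} g"
    by (rule integral_nonneg[OF integrable_continuous_interval[OF cont_g]]) (use G(2) in \<open>simp add: g_def\<close>)
  ultimately show ?thesis
    unfolding f_def g_def by (intro has_bochner_integral_nn_integral) auto
qed

lemma integrable_integral_upto_exp_BM:
  assumes BM: "std_BM_setting M F B" and "0 \<le> L"
    and G: "continuous_on {0..L} G" "\<And>s. s \<in> {0..L} \<Longrightarrow> 0 \<le> G s"
    and \<tau>: "\<tau> \<in> borel_measurable M" "\<And>\<omega>. \<omega> \<in> space M \<Longrightarrow> \<tau> \<omega> \<in> {0..L}"
  shows "integrable M (\<lambda>\<omega>. integral {0..\<tau> \<omega>} (\<lambda>s. G s * exp (c * B s \<omega>)))"
proof (rule integrable_integral_upto[OF \<open>0 \<le> L\<close> _ _ _ _ \<tau>])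
  show "continuous_on {0..L} (\<lambda>s. G s * exp (c * B s \<omega>))" if "\<omega> \<in> space M" for \<omega>
    using continuous_on_subset[OF std_BM_settingD(6)[OF BM that], of "{0..L}"]
    by (intro continuous_intros G) auto
  show "(\<lambda>\<omega>. G s * exp (c * B s \<omega>)) \<in> borel_measurable M" if "s \<in> {0..L}" for s
  proof -
    have [measurable]: "B s \<in> borel_measurable M"
      using std_BM_settingD(4)[OF BM, of s] that by auto
    show ?thesis by measurable
  qed
  show "0 \<le> G s * exp (c * B s \<omega>)" if "s \<in> {0..L}" for s \<omega>
    using G(2)[OF that] by simp
  have "integrable M (\<lambda>\<omega>. integral {0..L} (\<lambda>s. G s * exp (c * (B s \<omega> - B 0 \<omega>))))"
    using has_bochner_integral_integral_exp_BM[OF BM _ \<open>0 \<le> L\<close> G] by (simp add: has_bochner_integral_iff)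
  then show "integrable M (\<lambda>\<omega>. integral {0..L} (\<lambda>s. G s * exp (c * B s \<omega>)))"
    by (rule Bochner_Integration.integrable_cong[THEN iffD1, OF refl, rotated]) (simp add: std_BM_settingD(5)[OF BM])
qed

section \<open>The deterministic habit dynamics\<close>

(*
  For H^2 started from k at time t': \<eta> k x is H^2 at time t' + x, \<Psi> k x is the integral of
  M^{H^2} over [t', t' + x], and \<Phi> k x is the density in x of W(t', 1, k) once the Gaussian
  factor has been integrated out; d\<Psi> and d\<Phi> are the derivatives in k.
*)
locale habit_density =
  fixes m0 m1 \<kappa> \<delta> fI C q c :: real
  assumes m1: "m1 \<ge> 0" and \<kappa>: "\<kappa> > 0" and \<delta>: "\<delta> > 0" and fI: "fI \<ge> 0"
    and C: "C \<ge> 0" and q: "q \<le> 0"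
begin

definition \<eta> :: "real \<Rightarrow> real \<Rightarrow> real" where
  "\<eta> k x = k * exp (- \<delta> * x) + fI / \<delta> * (1 - exp (- \<delta> * x))"

definition \<Psi> :: "real \<Rightarrow> real \<Rightarrow> real" where
  "\<Psi> k x = integral {0..x} (\<lambda>v. MH m0 m1 \<kappa> (\<eta> k v))"

definition dMH :: "real \<Rightarrow> real" where
  "dMH y = m1 * (- \<kappa> * y powr (- \<kappa> - 1))"

definition d\<Psi> :: "real \<Rightarrow> real \<Rightarrow> real" where
  "d\<Psi> k x = integral {0..x} (\<lambda>v. dMH (\<eta> k v) * exp (- \<delta> * v))"

definition \<Phi> :: "real \<Rightarrow> real \<Rightarrow> real" where
  "\<Phi> k x = C * \<eta> k x * exp (q * \<Psi> k x + c * x)"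

definition d\<Phi> :: "real \<Rightarrow> real \<Rightarrow> real" where
  "d\<Phi> k x = C * exp (q * \<Psi> k x + c * x) * (exp (- \<delta> * x) + \<eta> k x * q * d\<Psi> k x)"

lemma \<eta>_pos:
  assumes "k > 0" "x \<ge> 0"
  shows "\<eta> k x > 0"
proof -
  have "fI / \<delta> * (1 - exp (- \<delta> * x)) \<ge> 0"
    using fI \<delta> assms by simp
  moreover have "k * exp (- \<delta> * x) > 0"
    using assms by simp
  ultimately show ?thesis
    unfolding \<eta>_def by linarith
qed

lemma continuous_on_\<eta>: "continuous_on S (\<lambda>(k,x). \<eta> k x)"
  unfolding \<eta>_def split_beta by (intro continuous_intros)

lemma has_field_derivative_\<eta>: "((\<lambda>k. \<eta> k x) has_field_derivative exp (- \<delta> * x)) (at k within U)"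
  unfolding \<eta>_def by (auto intro!: derivative_eq_intros)

lemma continuous_on_MH_\<eta>: "continuous_on ({0<..} \<times> {0..}) (\<lambda>(k,x). MH m0 m1 \<kappa> (\<eta> k x))"
  unfolding MH_def split_beta
  by (intro continuous_intros continuous_on_compose2[OF continuous_on_\<eta>, unfolded split_beta, of _ id, simplified])
     (auto dest: \<eta>_pos)

lemma continuous_on_dMH_\<eta>:
  "continuous_on ({0<..} \<times> {0..}) (\<lambda>(k,x). dMH (\<eta> k x) * exp (- \<delta> * x))"
  unfolding dMH_def split_beta
  by (intro continuous_intros continuous_on_compose2[OF continuous_on_\<eta>, unfolded split_beta, of _ id, simplified])
     (auto dest: \<eta>_pos)

lemma continuous_on_\<Psi>: "continuous_on ({0<..} \<times> {0..X}) (\<lambda>(k,x). \<Psi> k x)"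
  unfolding \<Psi>_def
  by (rule continuous_on_integral_upper_limit_param, rule continuous_on_subset[OF continuous_on_MH_\<eta>]) auto

lemma continuous_on_d\<Psi>: "continuous_on ({0<..} \<times> {0..X}) (\<lambda>(k,x). d\<Psi> k x)"
  unfolding d\<Psi>_def
  by (rule continuous_on_integral_upper_limit_param, rule continuous_on_subset[OF continuous_on_dMH_\<eta>]) auto

lemma has_field_derivative_MH_\<eta>:
  assumes "k > 0" "x \<ge> 0"
  shows "((\<lambda>k. MH m0 m1 \<kappa> (\<eta> k x)) has_field_derivative dMH (\<eta> k x) * exp (- \<delta> * x)) (at k within U)"
  using \<eta>_pos[OF assms] unfolding MH_def dMH_def
  by (auto intro!: derivative_eq_intros has_field_derivative_\<eta>)

lemma has_field_derivative_\<Psi>: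
  assumes "k > 0" "x \<ge> 0"
  shows "((\<lambda>k. \<Psi> k x) has_field_derivative d\<Psi> k x) (at k)"
proof -
  have "((\<lambda>k. integral (cbox 0 x) (\<lambda>v. MH m0 m1 \<kappa> (\<eta> k v))) has_field_derivative
          integral (cbox 0 x) (\<lambda>v. dMH (\<eta> k v) * exp (- \<delta> * v))) (at k within {0<..})"
  proof (rule leibniz_rule_field_derivative)
    show "(\<lambda>v. MH m0 m1 \<kappa> (\<eta> k v)) integrable_on cbox 0 x" if "k \<in> {0<..}" for k
      using continuous_on_slice[OF continuous_on_MH_\<eta>, of k "cbox 0 x"] that
      by (intro integrable_continuous) auto
    show "continuous_on ({0<..} \<times> cbox 0 x) (\<lambda>(k, v). dMH (\<eta> k v) * exp (- \<delta> * v))"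
      by (rule continuous_on_subset[OF continuous_on_dMH_\<eta>]) auto
    show "((\<lambda>k. MH m0 m1 \<kappa> (\<eta> k v)) has_field_derivative dMH (\<eta> k v) * exp (- \<delta> * v))
            (at k within {0<..})" if "k \<in> {0<..}" "v \<in> cbox 0 x" for k v
      using that by (intro has_field_derivative_MH_\<eta>) auto
  qed (use assms in auto)
  moreover have "at k within {0<..} = at k"
    using assms by (intro at_within_open) auto
  ultimately show ?thesis
    unfolding \<Psi>_def d\<Psi>_def by (simp add: cbox_interval)
qed

lemma d\<Psi>_nonpos:
  assumes "k > 0" "x \<ge> 0"
  shows "d\<Psi> k x \<le> 0"
proof -
  have "d\<Psi> k x \<le> integral {0..x} (\<lambda>v. 0)"
    unfolding d\<Psi>_def
  proof (rule integral_le)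
    show "(\<lambda>v. dMH (\<eta> k v) * exp (- \<delta> * v)) integrable_on {0..x}"
      using continuous_on_slice[OF continuous_on_dMH_\<eta>, of k "{0..x}"] assms
      by (intro integrable_continuous_interval) auto
    show "dMH (\<eta> k v) * exp (- \<delta> * v) \<le> 0" for v
      using m1 \<kappa> by (auto simp: dMH_def intro!: mult_nonpos_nonneg)
  qed auto
  then show ?thesis by simp
qed

lemma continuous_on_\<Phi>: "continuous_on ({0<..} \<times> {0..X}) (\<lambda>(k,x). \<Phi> k x)"
  unfolding \<Phi>_def split_beta
  by (intro continuous_intros continuous_on_compose2[OF continuous_on_\<Psi>, unfolded split_beta, of _ id, simplified]
      continuous_on_compose2[OF continuous_on_\<eta>, unfolded split_beta, of _ id, simplified]) auto

lemma continuous_on_d\<Phi>: "continuous_on ({0<..} \<times> {0..X}) (\<lambda>(k,x). d\<Phi> k x)"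
  unfolding d\<Phi>_def split_beta
  by (intro continuous_intros continuous_on_compose2[OF continuous_on_\<Psi>, unfolded split_beta, of _ id, simplified]
      continuous_on_compose2[OF continuous_on_d\<Psi>, unfolded split_beta, of _ id, simplified]
      continuous_on_compose2[OF continuous_on_\<eta>, unfolded split_beta, of _ id, simplified]) auto

lemma has_field_derivative_\<Phi>:
  assumes "k > 0" "x \<ge> 0"
  shows "((\<lambda>k. \<Phi> k x) has_field_derivative d\<Phi> k x) (at k within U)"
proof -
  have "((\<lambda>k. \<Psi> k x) has_field_derivative d\<Psi> k x) (at k within U)"
    using has_field_derivative_\<Psi>[OF assms] by (rule has_field_derivative_at_within)
  then show ?thesis
    unfolding \<Phi>_def d\<Phi>_def
    by (auto intro!: derivative_eq_intros has_field_derivative_\<eta> simp: algebra_simps)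
qed

lemma has_field_derivative_integral_\<Phi>:
  assumes "k > 0" "X \<ge> 0"
  shows "((\<lambda>k. integral {0..X} (\<Phi> k)) has_field_derivative integral {0..X} (d\<Phi> k)) (at k)"
proof -
  have "((\<lambda>k. integral (cbox 0 X) (\<Phi> k)) has_field_derivative integral (cbox 0 X) (d\<Phi> k))
          (at k within {0<..})"
  proof (rule leibniz_rule_field_derivative)
    show "\<Phi> k integrable_on cbox 0 X" if "k \<in> {0<..}" for k
      using continuous_on_slice[OF continuous_on_\<Phi>, of k "cbox 0 X"] that
      by (intro integrable_continuous) auto
  qed (use assms continuous_on_d\<Phi> in \<open>auto intro: has_field_derivative_\<Phi>\<close>)
  moreover have "at k within {0<..} = at k"
    using assms by (intro at_within_open) auto
  ultimately show ?thesis
    by (simp add: cbox_interval)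
qed

lemma \<Phi>_nonneg: "k > 0 \<Longrightarrow> x \<ge> 0 \<Longrightarrow> \<Phi> k x \<ge> 0"
  unfolding \<Phi>_def using C \<eta>_pos[of k x] by simp

lemma d\<Phi>_nonneg:
  assumes "k > 0" "x \<ge> 0"
  shows "d\<Phi> k x \<ge> 0"
proof -
  have "\<eta> k x * (q * d\<Psi> k x) \<ge> 0"
    using d\<Psi>_nonpos[OF assms] q \<eta>_pos[OF assms] by (simp add: mult_nonpos_nonpos)
  then show ?thesis
    unfolding d\<Phi>_def using C by (simp add: mult.assoc)
qed

end

section \<open>The value function and the stopping problem\<close>

lemma mono_on_mult_diff_powr:
  fixes a b p :: real
  assumes "0 \<le> a" "0 \<le> b" "p \<le> 0"
  shows "mono_on {0<..} (\<lambda>z. z * a - z powr p * b)"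
proof (rule mono_onI)
  fix z1 z2 :: real assume "z1 \<in> {0<..}" "z2 \<in> {0<..}" "z1 \<le> z2"
  then have "z1 * a \<le> z2 * a" "z2 powr p * b \<le> z1 powr p * b"
    using assms by (auto intro: mult_right_mono powr_mono2')
  then show "z1 * a - z1 powr p * b \<le> z2 * a - z2 powr p * b"
    by simp
qed

lemma powr_exp_divide:
  fixes a x e :: real
  assumes "a > 0"
  shows "(exp x / a) powr e = exp (e * x - e * ln a)"
proof -
  have "(exp x / a) powr e = exp (e * ln (exp x / a))"
    using assms by (simp add: powr_def)
  also have "\<dots> = exp (e * x - e * ln a)"
    using assms by (simp add: ln_div right_diff_distrib)
  finally show ?thesis .
qed

locale habit_model =
  fixes M :: "'a measure" and F :: "real \<Rightarrow> 'a measure" and B :: "real \<Rightarrow> 'a \<Rightarrow> real"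
    and T r \<mu> \<sigma> \<rho> m0 m1 \<kappa> \<delta> \<alpha> I fI t h :: real
  assumes BM: "std_BM_setting M F B"
    and m1: "m1 \<ge> 0" and \<kappa>: "\<kappa> > 0" and \<delta>: "\<delta> > 0" and \<alpha>0: "0 < \<alpha>" and \<alpha>1: "\<alpha> < 1"
    and I: "I \<ge> 0" and fI: "fI \<ge> 0" and t0: "0 \<le> t" and tT: "t < T" and h: "h > 0"
begin

abbreviation "\<theta> \<equiv> theta r \<mu> \<sigma>"
abbreviation "WW \<equiv> W M B T r \<mu> \<sigma> \<rho> m0 m1 \<kappa> \<delta> \<alpha> fI"

definition "p = \<alpha> / (\<alpha> - 1)"
(* u_hat \<alpha> z k = Cu * z powr p * k *)
definition "Cu = (1 - \<alpha>) * exp (- p * ln \<alpha>)"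
definition "c = p * (\<rho> - r) - \<rho> - p * \<theta>\<^sup>2 / 2 + p\<^sup>2 * \<theta>\<^sup>2 / 2"

lemma p_neg: "p < 0"
  unfolding p_def using \<alpha>0 \<alpha>1 by (simp add: divide_pos_neg)

lemma Cu_pos: "Cu > 0"
  unfolding Cu_def using \<alpha>1 by simp

sublocale D: habit_density m0 m1 \<kappa> \<delta> fI Cu "p - 1" c
  using m1 \<kappa> \<delta> fI Cu_pos p_neg by unfold_locales auto

lemma H2_eq: "H2 \<delta> fI t' k u = D.\<eta> k (u - t')"
  unfolding H2_def D.\<eta>_def by simp

lemma integral_MH_H2:
  assumes "k > 0" "t' \<le> s"
  shows "integral {t'..s} (\<lambda>u. a + MH m0 m1 \<kappa> (H2 \<delta> fI t' k u)) = a * (s - t') + D.\<Psi> k (s - t')"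
proof -
  have cont: "continuous_on {0..s - t'} (\<lambda>v. MH m0 m1 \<kappa> (D.\<eta> k v))"
    using continuous_on_slice[OF D.continuous_on_MH_\<eta>, of k "{0..s - t'}"] assms by auto
  then have "continuous_on {t'..s} (\<lambda>u. MH m0 m1 \<kappa> (D.\<eta> k (u - t')))"
    by (rule continuous_on_compose2[of _ _ _ "\<lambda>u. u - t'", unfolded o_def])
       (auto intro!: continuous_intros)
  then have "integral {t'..s} (\<lambda>u. a + MH m0 m1 \<kappa> (H2 \<delta> fI t' k u))
      = integral {t'..s} (\<lambda>u. a) + integral {t'..s} (\<lambda>u. MH m0 m1 \<kappa> (D.\<eta> k (u - t')))"
    unfolding H2_eq by (intro integral_add integrable_continuous_interval) auto
  also have "integral {t'..s} (\<lambda>u. MH m0 m1 \<kappa> (D.\<eta> k (u - t'))) = D.\<Psi> k (s - t')"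
  proof -
    have "integral {t'..s} ((\<lambda>v. MH m0 m1 \<kappa> (D.\<eta> k v)) \<circ> (\<lambda>x. x + - t'))
        = integral {t' + - t'..s + - t'} (\<lambda>v. MH m0 m1 \<kappa> (D.\<eta> k v))"
      by (rule integral_shift) (use cont in simp)
    then show ?thesis
      unfolding D.\<Psi>_def by (simp add: o_def)
  qed
  finally show ?thesis
    using assms by simp
qed

lemma discounted_utility_eq:
  assumes "k > 0" "t' \<le> s"
  shows "exp (- integral {t'..s} (\<lambda>u. \<rho> + MH m0 m1 \<kappa> (H2 \<delta> fI t' k u)))
          * u_hat \<alpha> (Z2 r \<mu> \<sigma> \<rho> m0 m1 \<kappa> \<delta> fI B t' 1 k s \<omega>) (H2 \<delta> fI t' k s)
       = D.\<Phi> k (s - t') * exp (- (p\<^sup>2 * \<theta>\<^sup>2 / 2) * (s - t')) * exp (- p * \<theta> * (B s \<omega> - B t' \<omega>))"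
proof -
  define x where "x = s - t'"
  define \<Psi> where "\<Psi> = D.\<Psi> k x"
  define dB where "dB = B s \<omega> - B t' \<omega>"
  define X where "X = (\<rho> - r) * x + \<Psi> - \<theta>\<^sup>2 / 2 * x - \<theta> * dB"
  have Z2: "Z2 r \<mu> \<sigma> \<rho> m0 m1 \<kappa> \<delta> fI B t' 1 k s \<omega> = exp X"
    unfolding Z2_def integral_MH_H2[OF assms] X_def x_def \<Psi>_def dB_def by simp
  have H2: "H2 \<delta> fI t' k s = D.\<eta> k x"
    unfolding H2_eq x_def ..
  have "exp (- integral {t'..s} (\<lambda>u. \<rho> + MH m0 m1 \<kappa> (H2 \<delta> fI t' k u)))
          * u_hat \<alpha> (Z2 r \<mu> \<sigma> \<rho> m0 m1 \<kappa> \<delta> fI B t' 1 k s \<omega>) (H2 \<delta> fI t' k s)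
        = (1 - \<alpha>) * D.\<eta> k x * exp (- (\<rho> * x + \<Psi>) + (p * X - p * ln \<alpha>))"
    unfolding integral_MH_H2[OF assms] Z2 H2 u_hat_def p_def[symmetric] powr_exp_divide[OF \<alpha>0]
    by (simp add: exp_add x_def \<Psi>_def)
  also have "- (\<rho> * x + \<Psi>) + (p * X - p * ln \<alpha>)
      = - p * ln \<alpha> + ((p - 1) * \<Psi> + c * x) + (- (p\<^sup>2 * \<theta>\<^sup>2 / 2) * x) + (- p * \<theta>) * dB"
    unfolding X_def c_def by (simp add: algebra_simps power2_eq_square)
  also have "(1 - \<alpha>) * D.\<eta> k x * exp (- p * ln \<alpha> + ((p - 1) * \<Psi> + c * x)
        + (- (p\<^sup>2 * \<theta>\<^sup>2 / 2) * x) + (- p * \<theta>) * dB)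
      = Cu * D.\<eta> k x * exp ((p - 1) * \<Psi> + c * x) * exp (- (p\<^sup>2 * \<theta>\<^sup>2 / 2) * x) * exp (- p * \<theta> * dB)"
    unfolding Cu_def exp_add by (simp add: algebra_simps)
  finally show ?thesis
    unfolding D.\<Phi>_def x_def \<Psi>_def dB_def .
qed

lemma W_one_eq_integral:
  assumes "0 \<le> t'" "t' \<le> T" and "k > 0"
  shows "WW t' 1 k = integral {0..T - t'} (D.\<Phi> k)"
proof -
  define G where "G s = D.\<Phi> k (s - t') * exp (- (p\<^sup>2 * \<theta>\<^sup>2 / 2) * (s - t'))" for s
  have cont_\<Phi>: "continuous_on {0..T - t'} (D.\<Phi> k)"
    using continuous_on_slice[OF D.continuous_on_\<Phi>, of k "{0..T - t'}"] assms by auto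
  then have "continuous_on {t'..T} (\<lambda>s. D.\<Phi> k (s - t'))"
    by (rule continuous_on_compose2[of _ _ _ "\<lambda>s. s - t'", unfolded o_def])
       (auto intro!: continuous_intros)
  then have "continuous_on {t'..T} G"
    unfolding G_def by (intro continuous_intros)
  moreover have "0 \<le> G s" if "s \<in> {t'..T}" for s
    unfolding G_def using D.\<Phi>_nonneg[OF \<open>k > 0\<close>, of "s - t'"] that by simp
  ultimately have "has_bochner_integral M
      (\<lambda>\<omega>. integral {t'..T} (\<lambda>s. G s * exp (- p * \<theta> * (B s \<omega> - B t' \<omega>))))
      (integral {t'..T} (\<lambda>s. G s * exp ((- p * \<theta>)\<^sup>2 * (s - t') / 2)))"
    by (rule has_bochner_integral_integral_exp_BM[OF BM assms(1,2)])
  moreover have "integral {t'..T} (\<lambda>s. exp (- integral {t'..s} (\<lambda>u. \<rho> + MH m0 m1 \<kappa> (H2 \<delta> fI t' k u)))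
          * u_hat \<alpha> (Z2 r \<mu> \<sigma> \<rho> m0 m1 \<kappa> \<delta> fI B t' 1 k s \<omega>) (H2 \<delta> fI t' k s))
        = integral {t'..T} (\<lambda>s. G s * exp (- p * \<theta> * (B s \<omega> - B t' \<omega>)))" for \<omega>
    by (rule integral_cong) (use discounted_utility_eq[OF \<open>k > 0\<close>] in \<open>auto simp: G_def\<close>)
  ultimately have "WW t' 1 k = integral {t'..T} (\<lambda>s. G s * exp ((- p * \<theta>)\<^sup>2 * (s - t') / 2))"
    unfolding W_def by (simp add: has_bochner_integral_integral_eq)
  also have "\<dots> = integral {t'..T} (\<lambda>s. D.\<Phi> k (s - t'))"
    by (intro integral_cong) (simp add: G_def mult.assoc exp_add[symmetric] power_mult_distrib)
  also have "\<dots> = integral {0..T - t'} (D.\<Phi> k)"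
  proof -
    have "integral {t'..T} (D.\<Phi> k \<circ> (\<lambda>x. x + - t')) = integral {t' + - t'..T + - t'} (D.\<Phi> k)"
      by (rule integral_shift) (use cont_\<Phi> in simp)
    then show ?thesis by (simp add: o_def)
  qed
  finally show ?thesis .
qed

lemma W_homogeneous:
  assumes "z > 0"
  shows "WW t' z k = z powr p * WW t' 1 k"
proof -
  have "u_hat \<alpha> (Z2 r \<mu> \<sigma> \<rho> m0 m1 \<kappa> \<delta> fI B t' z k s \<omega>) H
        = z powr p * u_hat \<alpha> (Z2 r \<mu> \<sigma> \<rho> m0 m1 \<kappa> \<delta> fI B t' 1 k s \<omega>) H" for s \<omega> H
    unfolding u_hat_def Z2_def p_def[symmetric]
    by (simp add: powr_mult times_divide_eq_right[symmetric] del: times_divide_eq_right)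
  then show ?thesis
    unfolding W_def by (simp add: mult.left_commute[of _ "z powr p"])
qed

lemma W_h_eq:
  assumes "0 \<le> t'" "t' \<le> T" and "k > 0" and "z > 0"
  shows "W_h M B T r \<mu> \<sigma> \<rho> m0 m1 \<kappa> \<delta> \<alpha> fI t' z k = z powr p * integral {0..T - t'} (D.d\<Phi> k)"
proof -
  have "((\<lambda>k. WW t' 1 k) has_field_derivative integral {0..T - t'} (D.d\<Phi> k)) (at k)"
    by (rule has_field_derivative_transform_within_open[OF
          D.has_field_derivative_integral_\<Phi>[OF \<open>k > 0\<close>] _ _ W_one_eq_integral[OF assms(1,2), symmetric],
          of "{0<..}"])
       (use assms in auto)
  then have "((\<lambda>k. WW t' z k) has_field_derivative z powr p * integral {0..T - t'} (D.d\<Phi> k)) (at k)"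
    unfolding W_homogeneous[OF \<open>z > 0\<close>] by (rule DERIV_cmult)
  then show ?thesis
    unfolding W_h_def by (rule DERIV_imp_deriv)
qed

definition "L = T - t"
definition "\<Lambda> s = integral {0..s} (\<lambda>u. \<rho> + MH m0 m1 \<kappa> (H1 \<delta> h u))"
(* W_h at (t + s, z, H^1_s) is z^p * Wh_factor s, see J_integrand_eq. *)
definition "Wh_factor s = integral {0..L - s} (D.d\<Phi> (H1 \<delta> h s))"
definition "gain_rate s = I * exp (- (r + \<theta>\<^sup>2 / 2) * s)"
definition "cost_rate s = exp (- \<Lambda> s) * fI * Wh_factor s * exp (p * (\<Lambda> s - (r + \<theta>\<^sup>2 / 2) * s))"

definition "J_integrand z s \<omega> =
  I * z * exp (- r * s - \<theta> * B s \<omega> - \<theta>\<^sup>2 / 2 * s)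
  - exp (- integral {0..s} (\<lambda>u. \<rho> + MH m0 m1 \<kappa> (H1 \<delta> h u))) * fI
    * W_h M B T r \<mu> \<sigma> \<rho> m0 m1 \<kappa> \<delta> \<alpha> fI (t + s) (Z1 r \<mu> \<sigma> \<rho> m0 m1 \<kappa> \<delta> B z h s \<omega>) (H1 \<delta> h s)"

definition "J_value z \<tau> = (\<integral>\<omega>. integral {0..\<tau> \<omega>} (\<lambda>s. J_integrand z s \<omega>) \<partial>M)"

definition "expected_flow G \<gamma> \<tau> = (\<integral>\<omega>. integral {0..\<tau> \<omega>} (\<lambda>s. G s * exp (\<gamma> * B s \<omega>)) \<partial>M)"

lemma J_hat_eq_SUP:
  "J_hat M F B T r \<mu> \<sigma> \<rho> m0 m1 \<kappa> \<delta> \<alpha> I fI t z h = (SUP \<tau>\<in>stopping_times_upto M F L. ereal (J_value z \<tau>))"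
  unfolding J_hat_def J_value_def J_integrand_def L_def ..

lemma H1_pos: "H1 \<delta> h s > 0"
  unfolding H1_def using h by simp

lemma continuous_on_Wh_factor: "continuous_on {0..L} Wh_factor"
proof -
  have "continuous_on ({0<..} \<times> {0..L}) (\<lambda>(k,y). integral {0..y} (D.d\<Phi> k))"
    by (rule continuous_on_integral_upper_limit_param[OF D.continuous_on_d\<Phi>])
  then have "continuous_on {0..L} (\<lambda>s. (\<lambda>(k,y). integral {0..y} (D.d\<Phi> k)) (H1 \<delta> h s, L - s))"
    by (rule continuous_on_compose2) (auto simp: H1_def h intro!: continuous_intros)
  then show ?thesis
    unfolding Wh_factor_def by simp
qed

lemma Wh_factor_nonneg: "s \<in> {0..L} \<Longrightarrow> Wh_factor s \<ge> 0"
  unfolding Wh_factor_def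
  by (intro integral_nonneg integrable_continuous_interval
        continuous_on_slice[OF D.continuous_on_d\<Phi>[of L]] D.d\<Phi>_nonneg) (auto simp: H1_pos)

lemma continuous_on_gain_rate: "continuous_on S gain_rate"
  unfolding gain_rate_def by (intro continuous_intros)

lemma gain_rate_nonneg: "gain_rate s \<ge> 0"
  unfolding gain_rate_def using I by simp

lemma continuous_on_cost_rate: "continuous_on {0..L} cost_rate"
proof -
  have "continuous_on S (\<lambda>u. \<rho> + MH m0 m1 \<kappa> (H1 \<delta> h u))" for S
    unfolding MH_def H1_def using h by (intro continuous_intros) auto
  then have "continuous_on {0..L} \<Lambda>"
    unfolding \<Lambda>_def by (intro indefinite_integral_continuous_1 integrable_continuous_interval)
  then show ?thesis
    unfolding cost_rate_def by (intro continuous_intros continuous_on_Wh_factor)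
qed

lemma cost_rate_nonneg: "s \<in> {0..L} \<Longrightarrow> cost_rate s \<ge> 0"
  unfolding cost_rate_def using fI Wh_factor_nonneg by simp

lemma J_integrand_eq:
  assumes "z > 0" "s \<in> {0..L}"
  shows "J_integrand z s \<omega>
    = z * (gain_rate s * exp (- \<theta> * B s \<omega>)) - z powr p * (cost_rate s * exp (- p * \<theta> * B s \<omega>))"
proof -
  define E where "E = \<Lambda> s - (r + \<theta>\<^sup>2 / 2) * s - \<theta> * B s \<omega>"
  have Z1: "Z1 r \<mu> \<sigma> \<rho> m0 m1 \<kappa> \<delta> B z h s \<omega> = z * exp E"
    unfolding Z1_def E_def \<Lambda>_def by (simp add: algebra_simps)
  have "W_h M B T r \<mu> \<sigma> \<rho> m0 m1 \<kappa> \<delta> \<alpha> fI (t + s) (z * exp E) (H1 \<delta> h s) = (z * exp E) powr p * Wh_factor s"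
    using W_h_eq[of "t + s" "H1 \<delta> h s" "z * exp E"] assms t0 H1_pos
    by (simp add: Wh_factor_def L_def algebra_simps)
  moreover have "(z * exp E) powr p
      = z powr p * (exp (p * (\<Lambda> s - (r + \<theta>\<^sup>2 / 2) * s)) * exp (- p * \<theta> * B s \<omega>))"
    unfolding powr_mult E_def
    by (simp add: powr_def exp_add[symmetric] algebra_simps)
  moreover have "exp (- r * s - \<theta> * B s \<omega> - \<theta>\<^sup>2 / 2 * s) = exp (- (r + \<theta>\<^sup>2 / 2) * s) * exp (- \<theta> * B s \<omega>)"
    by (simp add: exp_add[symmetric] algebra_simps)
  ultimately show ?thesis
    unfolding J_integrand_def Z1 gain_rate_def cost_rate_def \<Lambda>_def[symmetric]
    by (simp add: algebra_simps)
qed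

lemma stopping_times_uptoD:
  assumes "\<tau> \<in> stopping_times_upto M F L"
  shows "\<tau> \<in> borel_measurable M" "\<And>\<omega>. \<omega> \<in> space M \<Longrightarrow> \<tau> \<omega> \<in> {0..L}"
  using assms measurable_stopping_time[of F \<tau> M] std_BM_settingD(2,3)[OF BM]
  unfolding stopping_times_upto_def by auto

lemma
  assumes "\<tau> \<in> stopping_times_upto M F L"
    and G: "continuous_on {0..L} G" "\<And>s. s \<in> {0..L} \<Longrightarrow> 0 \<le> G s"
  shows integrable_flow: "integrable M (\<lambda>\<omega>. integral {0..\<tau> \<omega>} (\<lambda>s. G s * exp (\<gamma> * B s \<omega>)))"
    and expected_flow_nonneg: "expected_flow G \<gamma> \<tau> \<ge> 0"
proof -
  have "0 \<le> L"
    unfolding L_def using tT by simp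
  show "integrable M (\<lambda>\<omega>. integral {0..\<tau> \<omega>} (\<lambda>s. G s * exp (\<gamma> * B s \<omega>)))"
    by (rule integrable_integral_upto_exp_BM[OF BM \<open>0 \<le> L\<close> G stopping_times_uptoD[OF assms(1)]])
  have "0 \<le> integral {0..\<tau> \<omega>} (\<lambda>s. G s * exp (\<gamma> * B s \<omega>))" if "\<omega> \<in> space M" for \<omega>
  proof (rule integral_nonneg)
    have "continuous_on {0..\<tau> \<omega>} (\<lambda>s. B s \<omega>)" "continuous_on {0..\<tau> \<omega>} G"
      using std_BM_settingD(6)[OF BM that] G(1) stopping_times_uptoD(2)[OF assms(1) that]
      by (auto elim!: continuous_on_subset)
    then show "(\<lambda>s. G s * exp (\<gamma> * B s \<omega>)) integrable_on {0..\<tau> \<omega>}"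
      by (intro integrable_continuous_interval continuous_intros)
    show "0 \<le> G s * exp (\<gamma> * B s \<omega>)" if "s \<in> {0..\<tau> \<omega>}" for s
      using G(2)[of s] that stopping_times_uptoD(2)[OF assms(1) \<open>\<omega> \<in> space M\<close>] by simp
  qed
  then show "expected_flow G \<gamma> \<tau> \<ge> 0"
    unfolding expected_flow_def by (intro integral_nonneg_AE AE_I2)
qed

lemma J_value_eq:
  assumes \<tau>: "\<tau> \<in> stopping_times_upto M F L" and "z > 0"
  shows "J_value z \<tau> = z * expected_flow gain_rate (- \<theta>) \<tau> - z powr p * expected_flow cost_rate (- p * \<theta>) \<tau>"
proof -
  note gain = continuous_on_gain_rate gain_rate_nonneg
  note cost = continuous_on_cost_rate cost_rate_nonneg
  have "integral {0..\<tau> \<omega>} (\<lambda>s. J_integrand z s \<omega>)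
      = z * integral {0..\<tau> \<omega>} (\<lambda>s. gain_rate s * exp (- \<theta> * B s \<omega>))
        - z powr p * integral {0..\<tau> \<omega>} (\<lambda>s. cost_rate s * exp (- p * \<theta> * B s \<omega>))"
    if "\<omega> \<in> space M" for \<omega>
  proof -
    have sub: "{0..\<tau> \<omega>} \<subseteq> {0..L}"
      using stopping_times_uptoD(2)[OF \<tau> that] by auto
    have "continuous_on {0..\<tau> \<omega>} (\<lambda>s. B s \<omega>)" "continuous_on {0..\<tau> \<omega>} cost_rate"
      using std_BM_settingD(6)[OF BM that] continuous_on_cost_rate sub
      by (auto elim!: continuous_on_subset)
    then have "integral {0..\<tau> \<omega>} (\<lambda>s. z * (gain_rate s * exp (- \<theta> * B s \<omega>))
          - z powr p * (cost_rate s * exp (- p * \<theta> * B s \<omega>)))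
        = integral {0..\<tau> \<omega>} (\<lambda>s. z * (gain_rate s * exp (- \<theta> * B s \<omega>)))
          - integral {0..\<tau> \<omega>} (\<lambda>s. z powr p * (cost_rate s * exp (- p * \<theta> * B s \<omega>)))"
      by (intro integral_diff integrable_continuous_interval continuous_intros continuous_on_gain_rate)
    moreover have "integral {0..\<tau> \<omega>} (\<lambda>s. J_integrand z s \<omega>) = integral {0..\<tau> \<omega>} (\<lambda>s. z * (gain_rate s
          * exp (- \<theta> * B s \<omega>)) - z powr p * (cost_rate s * exp (- p * \<theta> * B s \<omega>)))"
      using sub by (intro integral_cong J_integrand_eq[OF \<open>z > 0\<close>]) auto
    ultimately show ?thesis
      by simp
  qed
  then have "J_value z \<tau> = (\<integral>\<omega>. z * integral {0..\<tau> \<omega>} (\<lambda>s. gain_rate s * exp (- \<theta> * B s \<omega>))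
        - z powr p * integral {0..\<tau> \<omega>} (\<lambda>s. cost_rate s * exp (- p * \<theta> * B s \<omega>)) \<partial>M)"
    unfolding J_value_def by (intro Bochner_Integration.integral_cong) auto
  also have "\<dots> = z * expected_flow gain_rate (- \<theta>) \<tau> - z powr p * expected_flow cost_rate (- p * \<theta>) \<tau>"
    unfolding expected_flow_def
    using integrable_flow[OF \<tau> gain, of "- \<theta>"] integrable_flow[OF \<tau> cost, of "- p * \<theta>"]
    by simp
  finally show ?thesis .
qed

lemma mono_on_J_value:
  assumes "\<tau> \<in> stopping_times_upto M F L"
  shows "mono_on {0<..} (\<lambda>z. J_value z \<tau>)"
proof -
  have mono: "mono_on {0<..} (\<lambda>z. z * expected_flow gain_rate (- \<theta>) \<tau> - z powr p * expected_flow cost_rate (- p * \<theta>) \<tau>)"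
    using p_neg expected_flow_nonneg[OF assms continuous_on_gain_rate gain_rate_nonneg]
      expected_flow_nonneg[OF assms continuous_on_cost_rate cost_rate_nonneg]
    by (intro mono_on_mult_diff_powr) auto
  show ?thesis
  proof (rule mono_onI)
    fix z1 z2 :: real assume "z1 \<in> {0<..}" "z2 \<in> {0<..}" "z1 \<le> z2"
    then show "J_value z1 \<tau> \<le> J_value z2 \<tau>"
      using mono_onD[OF mono, of z1 z2] by (simp add: J_value_eq[OF assms])
  qed
qed

end

theorem proposition4p2:
  fixes M :: "'a measure" and F :: "real \<Rightarrow> 'a measure" and B :: "real \<Rightarrow> 'a \<Rightarrow> real"
    and T r \<mu> \<sigma> \<rho> m0 m1 \<kappa> \<delta> \<alpha> I fI t h :: real
  assumes setting: "std_BM_setting M F B"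
    and "T > 0" and "r > 0" and "\<sigma> > 0" and "\<rho> > 0" and "m0 \<ge> 0" and "m1 \<ge> 0"
    and "\<kappa> > 0" and "\<delta> > 0" and "0 < \<alpha>" and "\<alpha> < 1" and "I > 0" and "fI > 0"
    and "0 \<le> t" and "t < T" and "h > 0"
  shows "mono_on {0<..} (\<lambda>z. J_hat M F B T r \<mu> \<sigma> \<rho> m0 m1 \<kappa> \<delta> \<alpha> I fI t z h)"
proof -
  interpret habit_model M F B T r \<mu> \<sigma> \<rho> m0 m1 \<kappa> \<delta> \<alpha> I fI t h
    by unfold_locales (use assms in auto)
  show ?thesis
  proof (rule mono_onI)
    fix z1 z2 :: real assume "z1 \<in> {0<..}" "z2 \<in> {0<..}" "z1 \<le> z2"
    then have "J_value z1 \<tau> \<le> J_value z2 \<tau>" if "\<tau> \<in> stopping_times_upto M F L" for \<tau>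
      by (intro mono_onD[OF mono_on_J_value[OF that]]) auto
    then show "J_hat M F B T r \<mu> \<sigma> \<rho> m0 m1 \<kappa> \<delta> \<alpha> I fI t z1 h \<le> J_hat M F B T r \<mu> \<sigma> \<rho> m0 m1 \<kappa> \<delta> \<alpha> I fI t z2 h"
      unfolding J_hat_eq_SUP by (intro SUP_subset_mono) auto
  qed
qed

end
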